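(* Let $(Z,Z_{ac},h)$ be a normal accretive operator space and define, for $z\in M_n(Z)$, $\nu_{max}^n(z)=\inf\{h_n(z+p):p\in Z_{ac}^n\}$. Then $\nu_{max}=\{\nu_{max}^n\}$ is a $\mathbb{C}$-proper matrix gauge which induces $(Z,Z_{ac},h)$, i.e. $Z_{ac}^n=\{z:\nu_{max}^n(-z)=0\}$ and $h_n(z)=\max\{\nu_{max}^n(z),\nu_{max}^n(-z)\}$ for all $n$ and $z\in M_n(Z)$.
   Context: For a complex vector space $Z$, $M_n(Z)$ is the $n\times n$ matrices over $Z$. A cone is a set $C$ with $C+C\subseteq C$, $tC\subseteq C$ for $t\ge0$; a matrix cone is a sequence of cones $C_n\subseteq M_n(Z)$ with $X^*C_nX\subseteq C_k$ for scalar $X\in M_{n,k}$; it is $\mathbb{C}$-proper if $C_1\cap-C_1\cap iC_1\cap-iC_1=\{0\}$, making $(Z,Z_{ac})$ an accretive matrix-ordered vector space. A matrix gauge is a sequence $\{\nu_n:M_n(Z)\to[0,\infty)\}$ with $\nu_n(x+y)\le\nu_n(x)+\nu_n(y)$, $\nu_n(tx)=t\nu_n(x)$ ($t\ge0$), $\nu_k(X^*AX)\le\|X\|^2\nu_n(A)$, $\nu_{n+m}(A\oplus B)=\max\{\nu_n(A),\nu_m(B)\}$; it is $\mathbb{C}$-proper if $\nu_1(i^kz)=0$ for $k=0,1,2,3$ implies $z=0$. A hermitian matrix gauge is a $\mathbb{C}$-proper matrix gauge with $h_n(tz)=|t|h_n(z)$ for real $t$. $Z_{ac}$ is $h$-closed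 if $z_k\in Z_{ac}^n$, $h_n(z_k-z)\to0$ imply $z\in Z_{ac}^n$. $(Z,Z_{ac},h)$ is a normal accretive operator space if $(Z,Z_{ac})$ is an accretive matrix-ordered vector space, $h$ is a hermitian matrix gauge, $Z_{ac}$ is $h$-closed, and $y-x,\ z-y\in Z_{ac}^n$ imply $h_n(y)\le\max\{h_n(x),h_n(z)\}$. A matrix gauge $\nu$ induces $(Z,Z_{ac},h)$ if $Z_{ac}^n=\{z:\nu_n(-z)=0\}$ and $h_n(z)=\max\{\nu_n(z),\nu_n(-z)\}$ for all $n,z$. *)

theory Defs
  imports "HOL-Analysis.Analysis"
begin

class cvec = ab_group_add +
  fixes cscale :: "complex \<Rightarrow> 'a \<Rightarrow> 'a" (infixr "\<cdot>\<^sub>C" 75)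
  assumes cscale_add_right: "c \<cdot>\<^sub>C (x + y) = c \<cdot>\<^sub>C x + c \<cdot>\<^sub>C y"
    and cscale_add_left: "(a + b) \<cdot>\<^sub>C x = a \<cdot>\<^sub>C x + b \<cdot>\<^sub>C x"
    and cscale_assoc: "a \<cdot>\<^sub>C (b \<cdot>\<^sub>C x) = (a * b) \<cdot>\<^sub>C x"
    and cscale_one: "1 \<cdot>\<^sub>C x = x"

text \<open>An n x n matrix over Z is represented as a function nat => nat => 'z
  vanishing outside {0..<n} x {0..<n}. Sizes n range over n >= 1.\<close>

type_synonym 'z mat = "nat \<Rightarrow> nat \<Rightarrow> 'z"

definition Mn :: "nat \<Rightarrow> 'z::zero mat set" where
  "Mn n = {A. \<forall>i j. (n \<le> i \<or> n \<le> j) \<longrightarrow> A i j = 0}"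

definition madd :: "'z::plus mat \<Rightarrow> 'z mat \<Rightarrow> 'z mat" where
  "madd A B = (\<lambda>i j. A i j + B i j)"

definition mneg :: "'z::uminus mat \<Rightarrow> 'z mat" where
  "mneg A = (\<lambda>i j. - A i j)"

definition msub :: "'z::minus mat \<Rightarrow> 'z mat \<Rightarrow> 'z mat" where
  "msub A B = (\<lambda>i j. A i j - B i j)"

definition mscaleR :: "real \<Rightarrow> 'z::cvec mat \<Rightarrow> 'z mat" where
  "mscaleR t A = (\<lambda>i j. complex_of_real t \<cdot>\<^sub>C A i j)"

definition mscaleC :: "complex \<Rightarrow> 'z::cvec mat \<Rightarrow> 'z mat" where
  "mscaleC c A = (\<lambda>i j. c \<cdot>\<^sub>C A i j)"

text \<open>X^* A X for a scalar matrix X in M_{n,k}(C) and A in M_n(Z); result in M_k(Z).\<close>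
definition conj_act :: "nat \<Rightarrow> nat \<Rightarrow> complex mat \<Rightarrow> 'z::cvec mat \<Rightarrow> 'z mat" where
  "conj_act n k X A = (\<lambda>i j. if i < k \<and> j < k then
      (\<Sum>p<n. \<Sum>q<n. (cnj (X p i) * X q j) \<cdot>\<^sub>C A p q) else 0)"

definition cmat_norm :: "nat \<Rightarrow> nat \<Rightarrow> complex mat \<Rightarrow> real" where
  "cmat_norm n k X = Sup {sqrt (\<Sum>i<n. (cmod (\<Sum>j<k. X i j * v j))\<^sup>2) | v.
       (\<Sum>j<k. (cmod (v j))\<^sup>2) \<le> 1}"

definition dsum :: "nat \<Rightarrow> nat \<Rightarrow> 'z::zero mat \<Rightarrow> 'z mat \<Rightarrow> 'z mat" where
  "dsum n m A B = (\<lambda>i j. if i < n \<and> j < n then A i j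
      else if n \<le> i \<and> i < n + m \<and> n \<le> j \<and> j < n + m then B (i - n) (j - n) else 0)"

definition is_cone :: "'z::cvec mat set \<Rightarrow> bool" where
  "is_cone C \<longleftrightarrow> (\<forall>x\<in>C. \<forall>y\<in>C. madd x y \<in> C) \<and> (\<forall>t\<ge>0. \<forall>x\<in>C. mscaleR t x \<in> C)"

definition matrix_cone :: "(nat \<Rightarrow> 'z::cvec mat set) \<Rightarrow> bool" where
  "matrix_cone C \<longleftrightarrow>
     (\<forall>n\<ge>1. C n \<subseteq> Mn n \<and> is_cone (C n)) \<and>
     (\<forall>n\<ge>1. \<forall>k\<ge>1. \<forall>X. \<forall>A\<in>C n. conj_act n k X A \<in> C k)"

definition C_proper_cone :: "(nat \<Rightarrow> 'z::cvec mat set) \<Rightarrow> bool" where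
  "C_proper_cone C \<longleftrightarrow>
     C 1 \<inter> mneg ` C 1 \<inter> mscaleC \<i> ` C 1 \<inter> mscaleC (- \<i>) ` C 1 = {\<lambda>i j. 0}"

definition accretive_mo_space :: "(nat \<Rightarrow> 'z::cvec mat set) \<Rightarrow> bool" where
  "accretive_mo_space C \<longleftrightarrow> matrix_cone C \<and> C_proper_cone C"

definition matrix_gauge :: "(nat \<Rightarrow> 'z::cvec mat \<Rightarrow> real) \<Rightarrow> bool" where
  "matrix_gauge \<nu> \<longleftrightarrow>
     (\<forall>n\<ge>1. \<forall>x\<in>Mn n. 0 \<le> \<nu> n x) \<and>
     (\<forall>n\<ge>1. \<forall>x\<in>Mn n. \<forall>y\<in>Mn n. \<nu> n (madd x y) \<le> \<nu> n x + \<nu> n y) \<and>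
     (\<forall>n\<ge>1. \<forall>x\<in>Mn n. \<forall>t\<ge>0. \<nu> n (mscaleR t x) = t * \<nu> n x) \<and>
     (\<forall>n\<ge>1. \<forall>k\<ge>1. \<forall>X. \<forall>A\<in>Mn n.
        \<nu> k (conj_act n k X A) \<le> (cmat_norm n k X)\<^sup>2 * \<nu> n A) \<and>
     (\<forall>n\<ge>1. \<forall>m\<ge>1. \<forall>A\<in>Mn n. \<forall>B\<in>Mn m.
        \<nu> (n + m) (dsum n m A B) = max (\<nu> n A) (\<nu> m B))"

definition C_proper_gauge :: "(nat \<Rightarrow> 'z::cvec mat \<Rightarrow> real) \<Rightarrow> bool" where
  "C_proper_gauge \<nu> \<longleftrightarrow>
     (\<forall>z\<in>Mn 1. (\<forall>k::nat<4. \<nu> 1 (mscaleC (\<i> ^ k) z) = 0) \<longrightarrow> z = (\<lambda>i j. 0))"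

definition hermitian_matrix_gauge :: "(nat \<Rightarrow> 'z::cvec mat \<Rightarrow> real) \<Rightarrow> bool" where
  "hermitian_matrix_gauge h \<longleftrightarrow> matrix_gauge h \<and> C_proper_gauge h \<and>
     (\<forall>n\<ge>1. \<forall>z\<in>Mn n. \<forall>t::real. h n (mscaleR t z) = \<bar>t\<bar> * h n z)"

definition h_closed :: "(nat \<Rightarrow> 'z::cvec mat set) \<Rightarrow> (nat \<Rightarrow> 'z mat \<Rightarrow> real) \<Rightarrow> bool" where
  "h_closed C h \<longleftrightarrow> (\<forall>n\<ge>1. \<forall>zs z. (\<forall>k. zs k \<in> C n) \<and> z \<in> Mn n \<and>
       (\<lambda>k. h n (msub (zs k) z)) \<longlonglongrightarrow> 0 \<longrightarrow> z \<in> C n)"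

definition normal_accretive_operator_space ::
  "(nat \<Rightarrow> 'z::cvec mat set) \<Rightarrow> (nat \<Rightarrow> 'z mat \<Rightarrow> real) \<Rightarrow> bool" where
  "normal_accretive_operator_space C h \<longleftrightarrow>
     accretive_mo_space C \<and> hermitian_matrix_gauge h \<and> h_closed C h \<and>
     (\<forall>n\<ge>1. \<forall>x\<in>Mn n. \<forall>y\<in>Mn n. \<forall>z\<in>Mn n.
        msub y x \<in> C n \<and> msub z y \<in> C n \<longrightarrow> h n y \<le> max (h n x) (h n z))"

definition induces ::
  "(nat \<Rightarrow> 'z::cvec mat \<Rightarrow> real) \<Rightarrow> (nat \<Rightarrow> 'z mat set) \<Rightarrow> (nat \<Rightarrow> 'z mat \<Rightarrow> real) \<Rightarrow> bool" where
  "induces \<nu> C h \<longleftrightarrow> (\<forall>n\<ge>1. C n = {z \<in> Mn n. \<nu> n (mneg z) = 0} \<and>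
       (\<forall>z\<in>Mn n. h n z = max (\<nu> n z) (\<nu> n (mneg z))))"

definition nu_max :: "(nat \<Rightarrow> 'z::cvec mat set) \<Rightarrow> (nat \<Rightarrow> 'z mat \<Rightarrow> real) \<Rightarrow> nat \<Rightarrow> 'z mat \<Rightarrow> real" where
  "nu_max C h n z = Inf {h n (madd z p) | p. p \<in> C n}"

end

theory Submission
  imports Defs
begin

text \<open>
  \<open>nu_max n z\<close> is the \<open>h\<close>-distance from \<open>z\<close> to \<open>-Z\<^sub>a\<^sub>c\<^sup>n\<close>. Since \<open>Z\<^sub>a\<^sub>c\<close> is a matrix cone,
  the infimum inherits subadditivity, positive homogeneity, the conjugation bound and the
  direct-sum rule from \<open>h\<close> (the lower bound for direct sums by compressing to the diagonal
  blocks). \<open>nu_max n (-z) = 0\<close> means that \<open>z\<close> is an \<open>h\<close>-limit of elements of \<open>Z\<^sub>a\<^sub>c\<^sup>n\<close>,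
  so \<open>h\<close>-closedness identifies \<open>Z\<^sub>a\<^sub>c\<^sup>n\<close> as the zero set of \<open>nu_max n (-\<cdot>)\<close>; with it
  \<open>\<complex>\<close>-properness passes from the cone to the gauge. Finally, for \<open>p, q \<in> Z\<^sub>a\<^sub>c\<^sup>n\<close> the element
  \<open>z\<close> lies between \<open>z - q\<close> and \<open>z + p\<close>, so normality gives
  \<open>h z \<le> max (h (z + p)) (h (-z + q))\<close>, and the right side approximates
  \<open>max (nu_max z) (nu_max (-z))\<close>.
\<close>

lemma cscale_zero_left [simp]: "(0::complex) \<cdot>\<^sub>C (x::'a::cvec) = 0"
  by (metis add_cancel_right_right add_0 cscale_add_left)

lemma cscale_zero_right [simp]: "c \<cdot>\<^sub>C (0::'a::cvec) = 0"
  by (metis add_cancel_right_right add_0 cscale_add_right)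

lemma cscale_minus_left: "(- c) \<cdot>\<^sub>C (x::'a::cvec) = - (c \<cdot>\<^sub>C x)"
  by (metis add.right_inverse cscale_add_left cscale_zero_left add_eq_0_iff)

lemma sum_sum_delta:
  assumes "finite A" "finite B"
  shows "(\<Sum>a\<in>A. \<Sum>b\<in>B. if a = i \<and> b = j then f a b else 0) =
    (if i \<in> A \<and> j \<in> B then f i j else (0::'b::comm_monoid_add))"
proof -
  have "(\<Sum>a\<in>A. \<Sum>b\<in>B. if a = i \<and> b = j then f a b else 0) =
      (\<Sum>a\<in>A. if a = i then (if j \<in> B then f a j else 0) else 0)"
    using assms(2) by (intro sum.cong refl) (simp add: sum.delta')
  then show ?thesis
    using assms(1) by (simp add: sum.delta')
qed

lemma mscaleC_mscaleC: "mscaleC c (mscaleC d z) = mscaleC (c * d) (z::'z::cvec mat)"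
  by (simp add: mscaleC_def cscale_assoc)

lemma mscaleC_one: "mscaleC 1 z = (z::'z::cvec mat)"
  by (simp add: mscaleC_def cscale_one)

lemma mneg_eq_mscaleC: "mneg z = mscaleC (-1) (z::'z::cvec mat)"
  by (simp add: mscaleC_def mneg_def cscale_minus_left cscale_one)

lemma mscaleR_minus_one: "mscaleR (-1) z = mneg (z::'z::cvec mat)"
  by (simp add: mscaleR_def mneg_def cscale_minus_left cscale_one)

lemma mscaleR_zero: "mscaleR 0 z = (\<lambda>i j. 0::'z::cvec)"
  by (simp add: mscaleR_def)

lemma mscaleR_one: "mscaleR 1 z = (z::'z::cvec mat)"
  by (simp add: mscaleR_def cscale_one)

lemma mscaleR_mscaleR: "mscaleR s (mscaleR t z) = mscaleR (s * t) (z::'z::cvec mat)"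
  by (simp add: mscaleR_def cscale_assoc)

lemma mscaleR_madd: "mscaleR t (madd x y) = madd (mscaleR t x) (mscaleR t (y::'z::cvec mat))"
  by (simp add: mscaleR_def madd_def cscale_add_right)

lemma madd_zero_right [simp]: "madd z (\<lambda>i j. 0) = (z::'z::cvec mat)"
  by (simp add: madd_def)

lemma madd_mneg_left: "madd (mneg z) p = msub p (z::'z::cvec mat)"
  by (simp add: madd_def mneg_def msub_def fun_eq_iff)

lemma madd_madd_swap: "madd (madd x y) (madd p q) = madd (madd x p) (madd y (q::'z::cvec mat))"
  by (simp add: madd_def fun_eq_iff algebra_simps)

lemma conj_act_madd: "conj_act n k X (madd A B) = madd (conj_act n k X A) (conj_act n k X (B::'z::cvec mat))"
  by (simp add: conj_act_def madd_def fun_eq_iff cscale_add_right sum.distrib)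

lemma conj_act_zero: "conj_act n k X (\<lambda>i j. 0::'z::cvec) = (\<lambda>i j. 0)"
  by (simp add: conj_act_def fun_eq_iff)

lemma dsum_madd: "madd (dsum n m A B) (dsum n m P Q) = dsum n m (madd A P) (madd B (Q::'z::cvec mat))"
  by (simp add: dsum_def madd_def fun_eq_iff)

lemma Mn_zero [simp]: "(\<lambda>i j. 0) \<in> Mn n"
  by (simp add: Mn_def)

lemma Mn_madd: "x \<in> Mn n \<Longrightarrow> y \<in> Mn n \<Longrightarrow> madd x (y::'z::cvec mat) \<in> Mn n"
  by (simp add: Mn_def madd_def)

lemma Mn_mneg: "x \<in> Mn n \<Longrightarrow> mneg (x::'z::cvec mat) \<in> Mn n"
  by (simp add: Mn_def mneg_def)

lemma Mn_msub: "x \<in> Mn n \<Longrightarrow> y \<in> Mn n \<Longrightarrow> msub x (y::'z::cvec mat) \<in> Mn n"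
  by (simp add: Mn_def msub_def)

lemma Mn_mscaleR: "x \<in> Mn n \<Longrightarrow> mscaleR t x \<in> Mn n"
  by (simp add: Mn_def mscaleR_def)

lemma Mn_mscaleC: "x \<in> Mn n \<Longrightarrow> mscaleC c x \<in> Mn n"
  by (simp add: Mn_def mscaleC_def)

lemma Mn_conj_act: "conj_act n k X A \<in> Mn k"
  by (simp add: Mn_def conj_act_def)

lemma Mn_dsum: "dsum n m A B \<in> Mn (n + m)"
  by (simp add: Mn_def dsum_def)

lemma cmat_norm_square_le_one:
  assumes "\<And>v. (\<Sum>j<k. (cmod (v j))\<^sup>2) \<le> 1 \<Longrightarrow> (\<Sum>i<N. (cmod (\<Sum>j<k. X i j * v j))\<^sup>2) \<le> 1"
  shows "(cmat_norm N k X)\<^sup>2 \<le> 1"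
proof -
  let ?S = "{sqrt (\<Sum>i<N. (cmod (\<Sum>j<k. X i j * v j))\<^sup>2) | v. (\<Sum>j<k. (cmod (v j))\<^sup>2) \<le> 1}"
  have bound: "x \<le> 1" if "x \<in> ?S" for x
    using that assms by auto
  have zero: "0 \<in> ?S"
    by (rule CollectI, rule exI[of _ "\<lambda>_. 0"]) simp
  have "Sup ?S \<le> 1"
    using zero bound by (intro cSup_least) blast+
  moreover have "0 \<le> Sup ?S"
    using cSup_upper2[OF zero _ bdd_aboveI[OF bound]] by simp
  ultimately show ?thesis
    unfolding cmat_norm_def by (simp add: power_le_one)
qed

text \<open>\<open>isometry_shift s\<close>, viewed as an \<open>N \<times> k\<close> matrix, is the isometry \<open>e\<^sub>j \<mapsto> e\<^sub>j\<^sub>+\<^sub>s\<close>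
  of \<open>\<complex>\<^sup>k\<close> into \<open>\<complex>\<^sup>N\<close>.\<close>

definition isometry_shift :: "nat \<Rightarrow> complex mat" where
  "isometry_shift s = (\<lambda>a j. if a = j + s then 1 else 0)"

lemma conj_act_isometry_shift:
  assumes "s + k \<le> N"
  shows "conj_act N k (isometry_shift s) M = (\<lambda>i j. if i < k \<and> j < k then M (i + s) (j + s) else 0)"
proof -
  have "(cnj (isometry_shift s p i) * isometry_shift s q j) \<cdot>\<^sub>C M p q =
      (if p = i + s \<and> q = j + s then M p q else 0)" for p q i j
    by (simp add: isometry_shift_def cscale_one)
  then show ?thesis
    using assms by (simp add: conj_act_def sum_sum_delta fun_eq_iff)
qed

lemma conj_act_isometry_shift_adjoint:
  assumes "A \<in> Mn k"
  shows "conj_act k N (\<lambda>a j. isometry_shift s j a) A =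
    (\<lambda>i j. if i < N \<and> j < N \<and> s \<le> i \<and> s \<le> j then A (i - s) (j - s) else 0)"
proof -
  have "(cnj (isometry_shift s i p) * isometry_shift s j q) \<cdot>\<^sub>C A p q =
      (if p = i - s \<and> q = j - s then (if s \<le> i \<and> s \<le> j then A p q else 0) else 0)" for p q i j
    by (auto simp add: isometry_shift_def cscale_one)
  moreover have "s \<le> i \<Longrightarrow> s \<le> j \<Longrightarrow> \<not> (i - s < k \<and> j - s < k) \<Longrightarrow> A (i - s) (j - s) = 0" for i j
    using assms by (auto simp: Mn_def)
  ultimately show ?thesis
    by (simp add: conj_act_def sum_sum_delta fun_eq_iff)
qed
lemma cmat_norm_isometry_shift:
  assumes "s + k \<le> N"
  shows "(cmat_norm N k (isometry_shift s))\<^sup>2 \<le> 1"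
proof (rule cmat_norm_square_le_one)
  fix v :: "nat \<Rightarrow> complex"
  assume v: "(\<Sum>j<k. (cmod (v j))\<^sup>2) \<le> 1"
  have shift_apply: "(\<Sum>j<k. isometry_shift s i j * v j) = (if i \<in> {s..<s+k} then v (i - s) else 0)" for i
  proof -
    have "(\<Sum>j<k. isometry_shift s i j * v j) = (\<Sum>j<k. if j = i - s then (if s \<le> i then v j else 0) else 0)"
      by (intro sum.cong) (auto simp: isometry_shift_def)
    also have "\<dots> = (if i \<in> {s..<s+k} then v (i - s) else 0)"
      by (simp add: sum.delta') linarith
    finally show ?thesis .
  qed
  have "(\<Sum>i<N. (cmod (\<Sum>j<k. isometry_shift s i j * v j))\<^sup>2) = (\<Sum>i\<in>{s..<s+k}. (cmod (v (i - s)))\<^sup>2)"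
    using assms by (intro sum.mono_neutral_cong_right) (auto simp: shift_apply)
  also have "\<dots> = (\<Sum>j<k. (cmod (v j))\<^sup>2)"
    using sum.shift_bounds_nat_ivl[of "\<lambda>i. (cmod (v (i - s)))\<^sup>2" 0 s k]
    by (simp add: lessThan_atLeast0 add.commute)
  finally show "(\<Sum>i<N. (cmod (\<Sum>j<k. isometry_shift s i j * v j))\<^sup>2) \<le> 1"
    using v by simp
qed

lemma conj_act_dsum_first:
  assumes "a \<in> Mn n"
  shows "conj_act (n + m) n (isometry_shift 0) (dsum n m a b) = a"
  using assms by (auto simp: conj_act_isometry_shift dsum_def Mn_def fun_eq_iff)

lemma conj_act_dsum_second:
  assumes "b \<in> Mn m"
  shows "conj_act (n + m) m (isometry_shift n) (dsum n m a b) = b"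
  using assms by (auto simp: conj_act_isometry_shift dsum_def Mn_def fun_eq_iff)

lemma dsum_eq_madd_conj_act:
  assumes "a \<in> Mn n" "b \<in> Mn m"
  shows "dsum n m a b = madd (conj_act n (n + m) (\<lambda>p j. isometry_shift 0 j p) a)
    (conj_act m (n + m) (\<lambda>p j. isometry_shift n j p) (b::'z::cvec mat))"
  using assms by (auto simp: conj_act_isometry_shift_adjoint dsum_def madd_def Mn_def fun_eq_iff)

locale normal_accretive_space =
  fixes C :: "nat \<Rightarrow> 'z::cvec mat set" and h :: "nat \<Rightarrow> 'z mat \<Rightarrow> real"
  assumes normal: "normal_accretive_operator_space C h"
begin

lemma matrix_cone: "matrix_cone C"
  and C_proper: "C_proper_cone C"
  and hermitian: "hermitian_matrix_gauge h"
  and closed: "h_closed C h"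
  and h_le_max_of_between: "\<And>n x y z. n \<ge> 1 \<Longrightarrow> x \<in> Mn n \<Longrightarrow> y \<in> Mn n \<Longrightarrow> z \<in> Mn n \<Longrightarrow>
        msub y x \<in> C n \<Longrightarrow> msub z y \<in> C n \<Longrightarrow> h n y \<le> max (h n x) (h n z)"
  using normal unfolding normal_accretive_operator_space_def accretive_mo_space_def by auto

lemma C_subset_Mn: "n \<ge> 1 \<Longrightarrow> x \<in> C n \<Longrightarrow> x \<in> Mn n"
  using matrix_cone unfolding matrix_cone_def by blast

lemma C_madd: "n \<ge> 1 \<Longrightarrow> x \<in> C n \<Longrightarrow> y \<in> C n \<Longrightarrow> madd x y \<in> C n"
  using matrix_cone unfolding matrix_cone_def is_cone_def by blast

lemma C_mscaleR: "n \<ge> 1 \<Longrightarrow> t \<ge> 0 \<Longrightarrow> x \<in> C n \<Longrightarrow> mscaleR t x \<in> C n"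
  using matrix_cone unfolding matrix_cone_def is_cone_def by blast

lemma C_conj_act: "n \<ge> 1 \<Longrightarrow> k \<ge> 1 \<Longrightarrow> x \<in> C n \<Longrightarrow> conj_act n k X x \<in> C k"
  using matrix_cone unfolding matrix_cone_def by blast

lemma C_zero: "n \<ge> 1 \<Longrightarrow> (\<lambda>i j. 0) \<in> C n"
proof -
  assume n: "n \<ge> 1"
  have "(\<lambda>i j. 0) \<in> C 1"
    using C_proper unfolding C_proper_cone_def by blast
  from C_conj_act[OF _ n this, of X] show ?thesis
    by (simp add: conj_act_zero)
qed

lemma h_nonneg: "n \<ge> 1 \<Longrightarrow> x \<in> Mn n \<Longrightarrow> 0 \<le> h n x"
  using hermitian unfolding hermitian_matrix_gauge_def matrix_gauge_def by blast

lemma h_madd_le: "n \<ge> 1 \<Longrightarrow> x \<in> Mn n \<Longrightarrow> y \<in> Mn n \<Longrightarrow> h n (madd x y) \<le> h n x + h n y"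
  using hermitian unfolding hermitian_matrix_gauge_def matrix_gauge_def by blast

lemma h_conj_act_le:
  "n \<ge> 1 \<Longrightarrow> k \<ge> 1 \<Longrightarrow> x \<in> Mn n \<Longrightarrow> h k (conj_act n k X x) \<le> (cmat_norm n k X)\<^sup>2 * h n x"
  using hermitian unfolding hermitian_matrix_gauge_def matrix_gauge_def by blast

lemma h_dsum: "n \<ge> 1 \<Longrightarrow> m \<ge> 1 \<Longrightarrow> x \<in> Mn n \<Longrightarrow> y \<in> Mn m \<Longrightarrow>
    h (n + m) (dsum n m x y) = max (h n x) (h m y)"
  using hermitian unfolding hermitian_matrix_gauge_def matrix_gauge_def by blast

lemma h_mscaleR: "n \<ge> 1 \<Longrightarrow> x \<in> Mn n \<Longrightarrow> h n (mscaleR t x) = \<bar>t\<bar> * h n x"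
  using hermitian unfolding hermitian_matrix_gauge_def by blast

lemma h_mneg: "n \<ge> 1 \<Longrightarrow> x \<in> Mn n \<Longrightarrow> h n (mneg x) = h n x"
  using h_mscaleR[of n x "-1"] by (simp add: mscaleR_minus_one)

lemma h_zero: "n \<ge> 1 \<Longrightarrow> h n (\<lambda>i j. 0) = 0"
  using h_mscaleR[of n "\<lambda>i j. 0" 0] by (simp add: mscaleR_zero)

abbreviation "\<nu> \<equiv> nu_max C h"

lemma nu_max_le: "n \<ge> 1 \<Longrightarrow> z \<in> Mn n \<Longrightarrow> p \<in> C n \<Longrightarrow> \<nu> n z \<le> h n (madd z p)"
  unfolding nu_max_def
  by (rule cInf_lower) (auto intro!: bdd_belowI[where m=0] h_nonneg Mn_madd simp: C_subset_Mn)

lemma nu_max_greatest: "n \<ge> 1 \<Longrightarrow> (\<And>p. p \<in> C n \<Longrightarrow> c \<le> h n (madd z p)) \<Longrightarrow> c \<le> \<nu> n z"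
  unfolding nu_max_def by (rule cInf_greatest) (use C_zero in blast)+

lemma nu_max_nonneg: "n \<ge> 1 \<Longrightarrow> z \<in> Mn n \<Longrightarrow> 0 \<le> \<nu> n z"
  by (rule nu_max_greatest) (auto intro!: h_nonneg Mn_madd simp: C_subset_Mn)

lemma nu_max_le_h: "n \<ge> 1 \<Longrightarrow> z \<in> Mn n \<Longrightarrow> \<nu> n z \<le> h n z"
  using nu_max_le[OF _ _ C_zero] by simp

lemma nu_max_approx: "n \<ge> 1 \<Longrightarrow> e > 0 \<Longrightarrow> \<exists>p\<in>C n. h n (madd z p) < \<nu> n z + e"
  using nu_max_greatest[of n "\<nu> n z + e" z] by force

lemma nu_max_madd_le:
  assumes n: "n \<ge> 1" and x: "x \<in> Mn n" and y: "y \<in> Mn n"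
  shows "\<nu> n (madd x y) \<le> \<nu> n x + \<nu> n y"
proof -
  have split: "\<nu> n (madd x y) \<le> h n (madd x p) + h n (madd y q)" if p: "p \<in> C n" and q: "q \<in> C n" for p q
  proof -
    have "\<nu> n (madd x y) \<le> h n (madd (madd x y) (madd p q))"
      using n x y p q by (intro nu_max_le Mn_madd C_madd)
    also have "\<dots> = h n (madd (madd x p) (madd y q))"
      by (simp add: madd_madd_swap)
    also have "\<dots> \<le> h n (madd x p) + h n (madd y q)"
      using n x y p q by (intro h_madd_le Mn_madd) (auto simp: C_subset_Mn)
    finally show ?thesis .
  qed
  have "\<nu> n (madd x y) - h n (madd y q) \<le> \<nu> n x" if "q \<in> C n" for q
    using split that by (intro nu_max_greatest n) force
  then have "\<nu> n (madd x y) - \<nu> n x \<le> \<nu> n y"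
    by (intro nu_max_greatest n) force
  then show ?thesis
    by simp
qed

lemma nu_max_mscaleR:
  assumes n: "n \<ge> 1" and x: "x \<in> Mn n" and t: "t \<ge> 0"
  shows "\<nu> n (mscaleR t x) = t * \<nu> n x"
proof (cases "t = 0")
  case True
  have "\<nu> n (\<lambda>i j. 0) = 0"
    using nu_max_le_h[OF n Mn_zero] nu_max_nonneg[OF n Mn_zero] h_zero[OF n] by simp
  then show ?thesis
    using True by (simp add: mscaleR_zero)
next
  case False
  with t have t: "t > 0" by simp
  have tx: "mscaleR t x \<in> Mn n"
    using x by (rule Mn_mscaleR)
  have "\<nu> n (mscaleR t x) / t \<le> \<nu> n x"
  proof (rule nu_max_greatest[OF n])
    fix p assume p: "p \<in> C n"
    have "\<nu> n (mscaleR t x) \<le> h n (madd (mscaleR t x) (mscaleR t p))"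
      using t by (intro nu_max_le[OF n tx] C_mscaleR[OF n _ p]) simp
    also have "\<dots> = t * h n (madd x p)"
      using h_mscaleR[OF n Mn_madd[OF x C_subset_Mn[OF n p]], of t] t by (simp add: mscaleR_madd)
    finally show "\<nu> n (mscaleR t x) / t \<le> h n (madd x p)"
      using t by (simp add: field_simps)
  qed
  moreover have "t * \<nu> n x \<le> \<nu> n (mscaleR t x)"
  proof (rule nu_max_greatest[OF n])
    fix p assume p: "p \<in> C n"
    have "\<nu> n x \<le> h n (madd x (mscaleR (1/t) p))"
      using t by (intro nu_max_le[OF n x] C_mscaleR[OF n _ p]) simp
    also have "madd x (mscaleR (1/t) p) = mscaleR (1/t) (madd (mscaleR t x) p)"
      using t by (simp add: mscaleR_madd mscaleR_mscaleR mscaleR_one)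
    also have "h n \<dots> = (1/t) * h n (madd (mscaleR t x) p)"
      using h_mscaleR[OF n Mn_madd[OF tx C_subset_Mn[OF n p]], of "1/t"] t by simp
    finally show "t * \<nu> n x \<le> h n (madd (mscaleR t x) p)"
      using t by (simp add: field_simps)
  qed
  ultimately show ?thesis
    using t by (simp add: field_simps)
qed

lemma nu_max_conj_act_le:
  assumes n: "n \<ge> 1" and k: "k \<ge> 1" and a: "a \<in> Mn n"
  shows "\<nu> k (conj_act n k X a) \<le> (cmat_norm n k X)\<^sup>2 * \<nu> n a"
proof -
  let ?c = "(cmat_norm n k X)\<^sup>2"
  have bound: "\<nu> k (conj_act n k X a) \<le> ?c * h n (madd a p)" if p: "p \<in> C n" for p
  proof -
    have "\<nu> k (conj_act n k X a) \<le> h k (madd (conj_act n k X a) (conj_act n k X p))"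
      by (rule nu_max_le[OF k Mn_conj_act C_conj_act[OF n k p]])
    also have "\<dots> = h k (conj_act n k X (madd a p))"
      by (simp add: conj_act_madd)
    also have "\<dots> \<le> ?c * h n (madd a p)"
      by (rule h_conj_act_le[OF n k Mn_madd[OF a C_subset_Mn[OF n p]]])
    finally show ?thesis .
  qed
  show ?thesis
  proof (cases "?c = 0")
    case True
    then show ?thesis
      using bound[OF C_zero[OF n]] by simp
  next
    case False
    then have c: "?c > 0"
      by (simp add: less_le)
    have "\<nu> k (conj_act n k X a) / ?c \<le> \<nu> n a"
      using bound c by (intro nu_max_greatest[OF n]) (simp add: field_simps)
    then show ?thesis
      using c by (simp add: field_simps)
  qed
qed

lemma nu_max_dsum:
  assumes n: "n \<ge> 1" and m: "m \<ge> 1" and a: "a \<in> Mn n" and b: "b \<in> Mn m"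
  shows "\<nu> (n + m) (dsum n m a b) = max (\<nu> n a) (\<nu> m b)"
proof (rule antisym)
  have nm: "n + m \<ge> 1"
    using n by simp
  show "\<nu> (n + m) (dsum n m a b) \<le> max (\<nu> n a) (\<nu> m b)"
  proof (rule field_le_epsilon)
    fix e :: real assume e: "e > 0"
    obtain p where p: "p \<in> C n" "h n (madd a p) < \<nu> n a + e"
      using nu_max_approx[OF n e] by blast
    obtain q where q: "q \<in> C m" "h m (madd b q) < \<nu> m b + e"
      using nu_max_approx[OF m e] by blast
    have "dsum n m p q \<in> C (n + m)"
      using dsum_eq_madd_conj_act[OF C_subset_Mn[OF n p(1)] C_subset_Mn[OF m q(1)]]
      by (simp add: C_madd[OF nm] C_conj_act[OF n nm p(1)] C_conj_act[OF m nm q(1)])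
    then have "\<nu> (n + m) (dsum n m a b) \<le> h (n + m) (madd (dsum n m a b) (dsum n m p q))"
      by (rule nu_max_le[OF nm Mn_dsum])
    also have "\<dots> = max (h n (madd a p)) (h m (madd b q))"
      using h_dsum[OF n m Mn_madd[OF a C_subset_Mn[OF n p(1)]] Mn_madd[OF b C_subset_Mn[OF m q(1)]]]
      by (simp add: dsum_madd)
    also have "\<dots> \<le> max (\<nu> n a) (\<nu> m b) + e"
      using p q by linarith
    finally show "\<nu> (n + m) (dsum n m a b) \<le> max (\<nu> n a) (\<nu> m b) + e" .
  qed
  have nonneg: "0 \<le> \<nu> (n + m) (dsum n m a b)"
    by (rule nu_max_nonneg[OF nm Mn_dsum])
  have "\<nu> n a \<le> (cmat_norm (n + m) n (isometry_shift 0))\<^sup>2 * \<nu> (n + m) (dsum n m a b)"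
    using nu_max_conj_act_le[OF nm n Mn_dsum[of n m a b], of "isometry_shift 0"]
    by (simp add: conj_act_dsum_first[OF a])
  also have "\<dots> \<le> \<nu> (n + m) (dsum n m a b)"
    using mult_right_mono[OF cmat_norm_isometry_shift nonneg] by simp
  finally have "\<nu> n a \<le> \<nu> (n + m) (dsum n m a b)" .
  moreover have "\<nu> m b \<le> (cmat_norm (n + m) m (isometry_shift n))\<^sup>2 * \<nu> (n + m) (dsum n m a b)"
    using nu_max_conj_act_le[OF nm m Mn_dsum[of n m a b], of "isometry_shift n"]
    by (simp add: conj_act_dsum_second[OF b])
  moreover have "\<dots> \<le> \<nu> (n + m) (dsum n m a b)"
    using mult_right_mono[OF cmat_norm_isometry_shift nonneg] by simp
  ultimately show "max (\<nu> n a) (\<nu> m b) \<le> \<nu> (n + m) (dsum n m a b)"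
    by simp
qed

lemma C_eq_nu_max_mneg_zero:
  assumes n: "n \<ge> 1"
  shows "C n = {z \<in> Mn n. \<nu> n (mneg z) = 0}"
proof (intro set_eqI iffI)
  fix z assume z: "z \<in> C n"
  have zm: "z \<in> Mn n"
    using C_subset_Mn[OF n z] .
  have "\<nu> n (mneg z) \<le> h n (madd (mneg z) z)"
    by (rule nu_max_le[OF n Mn_mneg[OF zm] z])
  also have "\<dots> = 0"
    using h_zero[OF n] by (simp add: madd_mneg_left msub_def)
  finally show "z \<in> {z \<in> Mn n. \<nu> n (mneg z) = 0}"
    using nu_max_nonneg[OF n Mn_mneg[OF zm]] zm by simp
next
  fix z assume "z \<in> {z \<in> Mn n. \<nu> n (mneg z) = 0}"
  then have zm: "z \<in> Mn n" and z0: "\<nu> n (mneg z) = 0"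
    by auto
  have "\<exists>p. p \<in> C n \<and> h n (msub p z) < inverse (real (Suc k))" for k
    using nu_max_approx[OF n, of "inverse (real (Suc k))" "mneg z"] z0 by (auto simp: madd_mneg_left)
  then obtain P where P: "\<And>k. P k \<in> C n" "\<And>k. h n (msub (P k) z) < inverse (real (Suc k))"
    by metis
  have "(\<lambda>k. h n (msub (P k) z)) \<longlonglongrightarrow> 0"
  proof (rule Lim_null_comparison[OF _ LIMSEQ_inverse_real_of_nat])
    show "\<forall>\<^sub>F k in sequentially. norm (h n (msub (P k) z)) \<le> inverse (real (Suc k))"
      using P h_nonneg[OF n Mn_msub[OF C_subset_Mn[OF n P(1)] zm]]
      by (intro always_eventually allI) (simp add: less_imp_le)
  qed
  then show "z \<in> C n"
    using closed n P(1) zm unfolding h_closed_def by blast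
qed

lemma h_eq_max_nu_max:
  assumes n: "n \<ge> 1" and z: "z \<in> Mn n"
  shows "h n z = max (\<nu> n z) (\<nu> n (mneg z))"
proof (rule antisym)
  show "max (\<nu> n z) (\<nu> n (mneg z)) \<le> h n z"
    using nu_max_le_h[OF n z] nu_max_le_h[OF n Mn_mneg[OF z]] h_mneg[OF n z] by simp
  show "h n z \<le> max (\<nu> n z) (\<nu> n (mneg z))"
  proof (rule field_le_epsilon)
    fix e :: real assume e: "e > 0"
    obtain p where p: "p \<in> C n" "h n (madd z p) < \<nu> n z + e"
      using nu_max_approx[OF n e] by blast
    obtain q where q: "q \<in> C n" "h n (madd (mneg z) q) < \<nu> n (mneg z) + e"
      using nu_max_approx[OF n e] by blast
    have pm: "p \<in> Mn n" and qm: "q \<in> Mn n"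
      using C_subset_Mn[OF n] p q by auto
    have "h n z \<le> max (h n (msub z q)) (h n (madd z p))"
    proof (rule h_le_max_of_between[OF n Mn_msub[OF z qm] z Mn_madd[OF z pm]])
      show "msub z (msub z q) \<in> C n"
        using q(1) by (simp add: msub_def)
      show "msub (madd z p) z \<in> C n"
        using p(1) by (simp add: msub_def madd_def)
    qed
    also have "h n (msub z q) = h n (madd (mneg z) q)"
      using h_mneg[OF n Mn_msub[OF z qm]] by (simp add: msub_def mneg_def madd_def)
    also have "max (h n (madd (mneg z) q)) (h n (madd z p)) \<le> max (\<nu> n z) (\<nu> n (mneg z)) + e"
      using p q by linarith
    finally show "h n z \<le> max (\<nu> n z) (\<nu> n (mneg z)) + e" .
  qed
qed

lemma C_proper_gauge_nu_max: "C_proper_gauge \<nu>"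
  unfolding C_proper_gauge_def
proof (intro ballI impI)
  fix z assume z: "z \<in> Mn 1" and vanish: "\<forall>k::nat<4. \<nu> 1 (mscaleC (\<i> ^ k) z) = 0"
  have in_C: "mscaleC (- (\<i> ^ k)) z \<in> C 1" if "k < 4" for k
  proof -
    have "mneg (mscaleC (- (\<i> ^ k)) z) = mscaleC (\<i> ^ k) z"
      by (simp add: mneg_eq_mscaleC mscaleC_mscaleC)
    then show ?thesis
      using vanish that z C_eq_nu_max_mneg_zero[of 1] by (simp add: Mn_mscaleC)
  qed
  have in_image: "z \<in> mscaleC c ` C 1" if "k < 4" "c * - (\<i> ^ k) = 1" for c k
    using that in_C[of k] by (intro image_eqI[of _ _ "mscaleC (- (\<i> ^ k)) z"])
      (simp_all add: mscaleC_mscaleC mscaleC_one)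
  have "z \<in> C 1"
    using in_C[of 2] by (simp add: mscaleC_one power2_eq_square)
  moreover have "z \<in> mneg ` C 1"
    using in_image[of 0 "-1"] by (simp add: mneg_eq_mscaleC image_image)
  moreover have "z \<in> mscaleC \<i> ` C 1"
    using in_image[of 1 \<i>] by simp
  moreover have "z \<in> mscaleC (- \<i>) ` C 1"
    using in_image[of 3 "- \<i>"] by (simp add: power3_eq_cube)
  ultimately show "z = (\<lambda>i j. 0)"
    using C_proper unfolding C_proper_cone_def by blast
qed

end

theorem proposition5p3:
  fixes Zac :: "nat \<Rightarrow> 'z::cvec mat set"
    and h :: "nat \<Rightarrow> 'z mat \<Rightarrow> real"
  assumes "normal_accretive_operator_space Zac h"
  shows "matrix_gauge (nu_max Zac h) \<and> C_proper_gauge (nu_max Zac h) \<and>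
         induces (nu_max Zac h) Zac h"
proof -
  interpret normal_accretive_space Zac h
    by standard (rule assms)
  have "matrix_gauge (nu_max Zac h)"
    unfolding matrix_gauge_def
    using nu_max_nonneg nu_max_madd_le nu_max_mscaleR nu_max_conj_act_le nu_max_dsum by auto
  moreover have "induces (nu_max Zac h) Zac h"
    unfolding induces_def using C_eq_nu_max_mneg_zero h_eq_max_nu_max by auto
  ultimately show ?thesis
    using C_proper_gauge_nu_max by auto
qed

end
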